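(* For every bounded set $X\subseteq\mathbb{R}^d$ we have $\mathrm{Flt}_d(X)\le\mathrm{Flt}^{\mathbb{R}}_d(X+[0,1]^d)$, where $X+[0,1]^d$ is the Minkowski sum.
   Context: Convex body: non-empty compact convex subset of $\mathbb{R}^d$; $\mathrm{width}(K)=\min_{u\in(\mathbb{Z}^d)^*\setminus\{0\}}\max_{x,y\in K}|u(x)-u(y)|$. A unimodular (resp. $\mathbb{R}$-unimodular) copy of $Y\subseteq\mathbb{R}^d$ is $\{Ay+b:y\in Y\}$ with $A\in\mathrm{GL}(d,\mathbb{Z})$ and $b\in\mathbb{Z}^d$ (resp. $b\in\mathbb{R}^d$). For bounded $X$: $\mathrm{Flt}_d(X)=\sup\{\mathrm{width}(K): K\text{ convex body not containing a unimodular copy of }X\}$ and $\mathrm{Flt}^{\mathbb{R}}_d(X)=\sup\{\mathrm{width}(K): K\text{ convex body not containing an }\mathbb{R}\text{-unimodular copy of }X\}$ (values in $[0,\infty]$). *)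

theory Defs
  imports "HOL-Analysis.Analysis"
begin

definition int_vec :: "real^'n \<Rightarrow> bool" where
  "int_vec x \<longleftrightarrow> (\<forall>i. x $ i \<in> \<int>)"

definition GLZ :: "(real^'n^'n) set" where
  "GLZ = {A. (\<forall>i j. A $ i $ j \<in> \<int>) \<and> (det A = 1 \<or> det A = -1)}"

definition convex_body :: "(real^'n) set \<Rightarrow> bool" where
  "convex_body K \<longleftrightarrow> compact K \<and> convex K \<and> K \<noteq> {}"

text \<open>Lattice width: nonzero functionals in the dual lattice are x \<mapsto> a \<bullet> x with a a nonzero integer vector.\<close>
definition lattice_width :: "(real^'n) set \<Rightarrow> real" where
  "lattice_width K = Inf {Sup {\<bar>a \<bullet> x - a \<bullet> y\<bar> | x y. x \<in> K \<and> y \<in> K} | a. int_vec a \<and> a \<noteq> 0}"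

definition unimodular_copies :: "(real^'n) set \<Rightarrow> (real^'n) set set" where
  "unimodular_copies Y = {(\<lambda>y. A *v y + b) ` Y | A b. A \<in> GLZ \<and> int_vec b}"

definition R_unimodular_copies :: "(real^'n) set \<Rightarrow> (real^'n) set set" where
  "R_unimodular_copies Y = {(\<lambda>y. A *v y + b) ` Y | A b. A \<in> GLZ}"

definition Flt :: "(real^'n) set \<Rightarrow> ereal" where
  "Flt X = Sup {ereal (lattice_width K) | K. convex_body K \<and> (\<forall>C\<in>unimodular_copies X. \<not> C \<subseteq> K)}"

definition FltR :: "(real^'n) set \<Rightarrow> ereal" where
  "FltR X = Sup {ereal (lattice_width K) | K. convex_body K \<and> (\<forall>C\<in>R_unimodular_copies X. \<not> C \<subseteq> K)}"

definition unit_cube :: "(real^'n) set" where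
  "unit_cube = {y. \<forall>i. 0 \<le> y $ i \<and> y $ i \<le> 1}"

definition minkowski_sum :: "(real^'n) set \<Rightarrow> (real^'n) set \<Rightarrow> (real^'n) set" where
  "minkowski_sum A B = {x + y | x y. x \<in> A \<and> y \<in> B}"

end

theory Submission
  imports Defs
begin

text \<open>A convex body without a unimodular copy of \<open>X\<close> has no \<open>\<real>\<close>-unimodular copy of
  \<open>X + [0,1]^d\<close> either: writing \<open>A(X + [0,1]^d) + b\<close> with \<open>A \<in> GL(d,\<int>)\<close>, the point
  \<open>A\<^sup>-\<^sup>1b\<close> can be rounded up to an integer point by adding some \<open>c \<in> [0,1]^d\<close>, so
  \<open>AX + (Ac + b)\<close> is a unimodular copy of \<open>X\<close> inside it. Hence the supremum defining
  \<open>Flt\<^sub>d(X)\<close> ranges over a subset of the bodies for \<open>Flt\<^sup>\<real>\<^sub>d(X + [0,1]^d)\<close>.\<close>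

lemma int_vec_matrix_vector_mult:
  fixes A :: "real^'n^'m" and v :: "real^'n"
  assumes "\<forall>i j. A $ i $ j \<in> \<int>" and "int_vec v"
  shows "int_vec (A *v v)"
  using assms unfolding int_vec_def matrix_vector_mult_def
  by (auto intro!: Ints_mult)

lemma GLZ_lattice_point_in_cube_image:
  fixes A :: "real^'n^'n" and b :: "real^'n"
  assumes "A \<in> GLZ"
  obtains c where "c \<in> unit_cube" and "int_vec (A *v c + b)"
proof -
  have A_int: "\<forall>i j. A $ i $ j \<in> \<int>" and "det A \<noteq> 0"
    using assms by (auto simp: GLZ_def)
  then obtain B where "A ** B = mat 1"
    using invertible_det_nz unfolding invertible_def by blast
  then have A_w: "A *v (B *v b) = b"
    by (simp add: matrix_vector_mul_assoc)
  define z :: "real^'n" where "z = (\<chi> i. of_int \<lceil>(B *v b) $ i\<rceil>)"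
  define c where "c = z - B *v b"
  have round_up: "0 \<le> of_int \<lceil>x\<rceil> - x \<and> of_int \<lceil>x\<rceil> - x \<le> 1" for x :: real
    using ceiling_correct[of x] by linarith
  have "c \<in> unit_cube"
    unfolding unit_cube_def c_def z_def using round_up by simp
  moreover have "int_vec z"
    by (simp add: z_def int_vec_def)
  moreover have "A *v c + b = A *v z"
    unfolding c_def by (simp add: matrix_vector_mult_diff_distrib A_w)
  ultimately show ?thesis
    using that int_vec_matrix_vector_mult[OF A_int] by metis
qed

lemma R_unimodular_copy_of_cube_sum_contains_unimodular_copy:
  fixes X :: "(real^'n) set"
  assumes "C \<in> R_unimodular_copies (minkowski_sum X unit_cube)"
  obtains C' where "C' \<in> unimodular_copies X" and "C' \<subseteq> C"
proof -
  obtain A b where A: "A \<in> GLZ" and C: "C = (\<lambda>y. A *v y + b) ` minkowski_sum X unit_cube"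
    using assms unfolding R_unimodular_copies_def by blast
  obtain c where c: "c \<in> unit_cube" "int_vec (A *v c + b)"
    using GLZ_lattice_point_in_cube_image[OF A] .
  let ?C' = "(\<lambda>y. A *v y + (A *v c + b)) ` X"
  have "?C' \<in> unimodular_copies X"
    unfolding unimodular_copies_def using A c(2) by blast
  moreover have "A *v x + (A *v c + b) = A *v (x + c) + b" for x
    by (simp add: matrix_vector_right_distrib)
  then have "?C' \<subseteq> C"
    unfolding C minkowski_sum_def using c(1) by fastforce
  ultimately show ?thesis using that by blast
qed

theorem mainTheorem8:
  fixes X :: "(real^'n) set"
  assumes "bounded X"
  shows "Flt X \<le> FltR (minkowski_sum X (unit_cube :: (real^'n) set))"
  unfolding Flt_def FltR_def
proof (rule Sup_subset_mono, clarsimp)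
  fix K :: "(real^'n) set"
  assume "convex_body K" and no_copy: "\<forall>C\<in>unimodular_copies X. \<not> C \<subseteq> K"
  moreover have "\<forall>C\<in>R_unimodular_copies (minkowski_sum X unit_cube). \<not> C \<subseteq> K"
  proof
    fix C assume "C \<in> R_unimodular_copies (minkowski_sum X unit_cube)"
    then obtain C' where "C' \<in> unimodular_copies X" and "C' \<subseteq> C"
      by (rule R_unimodular_copy_of_cube_sum_contains_unimodular_copy)
    with no_copy show "\<not> C \<subseteq> K" by blast
  qed
  ultimately show "\<exists>K'. lattice_width K = lattice_width K' \<and> convex_body K' \<and>
      (\<forall>C\<in>R_unimodular_copies (minkowski_sum X unit_cube). \<not> C \<subseteq> K')"
    by blast
qed

end
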